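(* For every $\mathbb T\in\mathrm{Tab}_\lambda$ (identified with $1\otimes\mathbb T\in\mathcal M_\lambda$) and every $1\le i\le N$, $\mathbb T\,\Xi_i=s^{\mathrm{CT}_{\mathbb T}[i]}\,\mathbb T$.
   Context: $N\ge2$, $q,s$ indeterminates, $K=\mathbb C(q,s)$. Operators act on the right, composed left to right. $\mathcal H_N(s)$ is generated by $T_1,\dots,T_{N-1}$ with $(T_i+1)(T_i-s)=0$ and the braid relations. $\lambda$ is a partition of $N$ (French convention, rows numbered bottom to top); $\mathrm{Tab}_\lambda$ = reverse standard tableaux (bijective fillings by $1,\dots,N$ strictly decreasing left to right in rows and bottom to top in columns); $\mathrm{CT}_{\mathbb T}[i]$ = column minus row of the cell containing $i$; $\mathbb T^{(i,j)}$ exchanges $i,j$. $V_\lambda$ has basis $\mathrm{Tab}_\lambda$ with right action $\mathbb TT_i=s\mathbb T$ if $i,i+1$ share a row, $-\mathbb T$ if they share a column, and if $i$ is in a higher row than $i+1$, with $m=\mathrm{CT}_{\mathbb T}[i+1]-\mathrm{CT}_{\mathbb T}[i]>0$, $\mathbb TT_i=\frac{s-1}{1-s^m}\mathbb T+\frac{s(1-s^{m+1})(1-s^{m-1})}{(1-s^m)^2}\mathbb T^{(i,i+1)}$; the remaining case is determined by this formula for $\mathbb T^{(i,i+1)}$ and the quadratic relation. $\mathcal M_\lambda=K[x_1,\dots,x_N]\otimes V_\lambda$; with $p^{s_i}$ = $p$ with $x_i,x_{i+1}$ exchanged: $(p\otimes u)\mathbf T_i=(1-s)\frac{x_{i+1}(p-p^{s_i})}{x_i-x_{i+1}}\otimes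 u+p^{s_i}\otimes uT_i$, $(p\otimes u)\mathbf w=p(qx_N,x_1,\dots,x_{N-1})\otimes uT_1\cdots T_{N-1}$, $\mathbf T_i^{-1}=s^{-1}(\mathbf T_i+1-s)$. Cherednik operators: $\Xi_i=s^{i-N}\mathbf T_{i-1}^{-1}\cdots\mathbf T_1^{-1}\mathbf w\mathbf T_{N-1}\cdots\mathbf T_i$. *)

theory Defs
  imports Complex_Main "HOL-Library.Poly_Mapping" "HOL-Computational_Algebra.Polynomial"
    "HOL-Computational_Algebra.Fraction_Field"
begin

text \<open>K is the fraction field of C[q][s], i.e. C(q,s). The inner polynomial variable is q,
  the outer one is s.\<close>
type_synonym K = "complex poly poly fract"

definition qK :: K where "qK = Fract [:[:0, 1:]:] 1"
definition sK :: K where "sK = Fract [:0, 1:] 1"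

definition is_partition :: "nat \<Rightarrow> nat list \<Rightarrow> bool" where
  "is_partition N lam \<longleftrightarrow> sorted (rev lam) \<and> (\<forall>x\<in>set lam. 0 < x) \<and> sum_list lam = N"

text \<open>French convention, 0-indexed: cell (r,c) lies in row r (counted from the bottom,
  row 0 is the longest row) and column c.\<close>
definition diagram :: "nat list \<Rightarrow> (nat \<times> nat) set" where
  "diagram lam = {(r, c). r < length lam \<and> c < lam ! r}"

type_synonym tableau = "nat \<times> nat \<Rightarrow> nat"

definition Tab :: "nat list \<Rightarrow> tableau set" where
  "Tab lam = {T. (\<forall>x. x \<notin> diagram lam \<longrightarrow> T x = 0)
      \<and> bij_betw T (diagram lam) {1..sum_list lam}
      \<and> (\<forall>r c. (r, Suc c) \<in> diagram lam \<longrightarrow> T (r, c) > T (r, Suc c))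
      \<and> (\<forall>r c. (Suc r, c) \<in> diagram lam \<longrightarrow> T (r, c) > T (Suc r, c))}"

definition pos :: "tableau \<Rightarrow> nat \<Rightarrow> nat \<times> nat" where
  "pos T k = (THE x. T x = k)"

definition CT :: "tableau \<Rightarrow> nat \<Rightarrow> int" where
  "CT T k = int (snd (pos T k)) - int (fst (pos T k))"

definition tab_swap :: "tableau \<Rightarrow> nat \<Rightarrow> nat \<Rightarrow> tableau" where
  "tab_swap T i j = (\<lambda>x. if T x = i then j else if T x = j then i else T x)"

definition kscale :: "K \<Rightarrow> ('a \<Rightarrow>\<^sub>0 K) \<Rightarrow> ('a \<Rightarrow>\<^sub>0 K)" where
  "kscale c v = Poly_Mapping.map (\<lambda>x. c * x) v"

definition lin_ext :: "('a \<Rightarrow> ('b \<Rightarrow>\<^sub>0 K)) \<Rightarrow> ('a \<Rightarrow>\<^sub>0 K) \<Rightarrow> ('b \<Rightarrow>\<^sub>0 K)" where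
  "lin_ext f v = (\<Sum>a\<in>Poly_Mapping.keys v. kscale (Poly_Mapping.lookup v a) (f a))"

type_synonym vlam = "tableau \<Rightarrow>\<^sub>0 K"

definition hk_a :: "int \<Rightarrow> K" where
  "hk_a m = (sK - 1) / (1 - sK powi m)"

definition hk_b :: "int \<Rightarrow> K" where
  "hk_b m = sK * (1 - sK powi (m + 1)) * (1 - sK powi (m - 1)) / (1 - sK powi m)^2"

text \<open>In the last case (i in a lower row than i+1)
  the coefficients are exactly those forced by the formula for U = T^(i,i+1) and the quadratic
  relation: from U T_i = a U + b T and T_i^2 = (s-1) T_i + s one gets
  T T_i = (s - 1 - a) T + ((s - 1 - a) a + s)/b U.\<close>
definition hecke_tab :: "nat \<Rightarrow> tableau \<Rightarrow> vlam" where
  "hecke_tab i T =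
    (if fst (pos T i) = fst (pos T (Suc i)) then Poly_Mapping.single T sK
     else if snd (pos T i) = snd (pos T (Suc i)) then Poly_Mapping.single T (-1)
     else if fst (pos T i) > fst (pos T (Suc i)) then
       (let m = CT T (Suc i) - CT T i in
          Poly_Mapping.single T (hk_a m) + Poly_Mapping.single (tab_swap T i (Suc i)) (hk_b m))
     else
       (let U = tab_swap T i (Suc i); m = CT U (Suc i) - CT U i; a = hk_a m; b = hk_b m in
          Poly_Mapping.single T (sK - 1 - a) + Poly_Mapping.single U (((sK - 1 - a) * a + sK) / b)))"

definition hecke_V :: "nat \<Rightarrow> vlam \<Rightarrow> vlam" where
  "hecke_V i v = lin_ext (hecke_tab i) v"

type_synonym mono = "nat \<Rightarrow>\<^sub>0 nat"
type_synonym mpoly = "mono \<Rightarrow>\<^sub>0 K"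

definition var :: "nat \<Rightarrow> mpoly" where
  "var j = Poly_Mapping.single (Poly_Mapping.single j 1) 1"

definition mono_swap :: "nat \<Rightarrow> mono \<Rightarrow> mono" where
  "mono_swap i a = Abs_poly_mapping (\<lambda>k. Poly_Mapping.lookup a
      (if k = i then Suc i else if k = Suc i then i else k))"

definition poly_swap :: "nat \<Rightarrow> mpoly \<Rightarrow> mpoly" where
  "poly_swap i p = lin_ext (\<lambda>a. Poly_Mapping.single (mono_swap i a) 1) p"

text \<open>exponent vector of x^a(q x_N, x_1, ..., x_{N-1}) (without the factor q^{a_1})\<close>
definition mono_w :: "nat \<Rightarrow> mono \<Rightarrow> mono" where
  "mono_w N a = Abs_poly_mapping (\<lambda>k. if k = N then Poly_Mapping.lookup a 1
      else if 1 \<le> k \<and> k < N then Poly_Mapping.lookup a (Suc k) else Poly_Mapping.lookup a k)"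

text \<open>p(q x_N, x_1, ..., x_{N-1})\<close>
definition poly_w :: "nat \<Rightarrow> mpoly \<Rightarrow> mpoly" where
  "poly_w N p = lin_ext (\<lambda>a. Poly_Mapping.single (mono_w N a) (qK ^ Poly_Mapping.lookup a 1)) p"

definition divdiff :: "nat \<Rightarrow> mpoly \<Rightarrow> mpoly" where
  "divdiff i p = (THE r. r * (var i - var (Suc i)) = p - poly_swap i p)"

type_synonym mlam = "(mono \<times> tableau) \<Rightarrow>\<^sub>0 K"

definition tensor :: "mpoly \<Rightarrow> vlam \<Rightarrow> mlam" where
  "tensor p u = Abs_poly_mapping (\<lambda>(a, T). Poly_Mapping.lookup p a * Poly_Mapping.lookup u T)"

definition opT :: "nat \<Rightarrow> mlam \<Rightarrow> mlam" where
  "opT i = lin_ext (\<lambda>(a, T).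
      tensor (kscale (1 - sK) (var (Suc i) * divdiff i (Poly_Mapping.single a 1))) (Poly_Mapping.single T 1)
    + tensor (poly_swap i (Poly_Mapping.single a 1)) (hecke_tab i T))"

definition opTinv :: "nat \<Rightarrow> mlam \<Rightarrow> mlam" where
  "opTinv i v = kscale (inverse sK) (opT i v + kscale (1 - sK) v)"

text \<open>(p (x) u) w = p(q x_N, x_1, ..., x_{N-1}) (x) u T_1 ... T_{N-1}  (right action, T_1 first)\<close>
definition opw :: "nat \<Rightarrow> mlam \<Rightarrow> mlam" where
  "opw N = lin_ext (\<lambda>(a, T).
      tensor (poly_w N (Poly_Mapping.single a 1))
             (fold hecke_V [1..<N] (Poly_Mapping.single T 1)))"

text \<open>Xi_i = s^{i-N} T_{i-1}^{-1} ... T_1^{-1} w T_{N-1} ... T_i, operators acting on the right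
  and composed left to right (so T_{i-1}^{-1} is applied first).\<close>
definition Xi :: "nat \<Rightarrow> nat \<Rightarrow> mlam \<Rightarrow> mlam" where
  "Xi N i v = kscale (sK powi (int i - int N))
      (fold opT (rev [i..<N]) (opw N (fold opTinv (rev [1..<i]) v)))"

end

theory Submission
  imports Defs
begin

text \<open>On constant polynomials the divided differences vanish and \<open>w\<close> acts through
  \<open>T_1 \<cdots> T_(N-1)\<close> alone, so on \<open>1 \<otimes> V\<close> the operator \<open>\<Xi>_i\<close> becomes the Jucys--Murphy
  element \<open>J_i = s^(i-N) T_i \<cdots> T_(N-1) T_(N-1) \<cdots> T_i\<close>, which satisfies \<open>J_N = 1\<close> and
  \<open>J_i = s^(-1) T_i J_(i+1) T_i\<close>. The eigenvalue \<open>s^CT[i]\<close> follows by downward induction on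
  \<open>i\<close>, starting from \<open>CT[N] = 0\<close>. If \<open>i\<close> and \<open>i + 1\<close> share a row or a column, \<open>T_i\<close> acts
  on the tableau by \<open>s\<close> or \<open>-1\<close> and the content changes by \<open>\<plusminus>1\<close>. Otherwise the tableau and
  its \<open>(i, i + 1)\<close>-transposition span a \<open>T_i\<close>-stable plane on which \<open>J_(i+1)\<close> is diagonal,
  and the claim reduces to \<open>a s^m + (s - 1 - a) = 0\<close> for \<open>a = (s - 1) / (1 - s^m)\<close>, where
  \<open>m\<close> is the content difference.\<close>

lemma sK_nonzero: "sK \<noteq> 0"
  by (simp add: sK_def Zero_fract_def eq_fract)

lemma sK_power: "sK ^ n = Fract ([:0, 1:] ^ n) 1"
  by (induction n) (simp_all add: sK_def One_fract_def)

lemma sK_power_ne_one: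
  assumes "n > 0"
  shows "sK ^ n \<noteq> 1"
proof
  assume "sK ^ n = 1"
  then have "([:0, 1:] :: complex poly poly) ^ n = 1"
    by (simp add: sK_power One_fract_def eq_fract)
  then have "degree (([:0, 1:] :: complex poly poly) ^ n) = 0"
    by simp
  with assms show False
    by (simp add: degree_power_eq)
qed

lemma sK_power_int_ne_one:
  assumes "m \<noteq> 0"
  shows "sK powi m \<noteq> 1"
proof (cases "m \<ge> 0")
  case True
  with assms sK_power_ne_one[of "nat m"] show ?thesis
    by (simp add: power_int_def)
next
  case False
  with sK_power_ne_one[of "nat (- m)"] sK_nonzero show ?thesis
    by (simp add: power_int_def power_inverse)
qed

lemma sK_power_int_diff: "sK powi k = sK powi l * sK powi (k - l)"
  using sK_nonzero by (simp add: power_int_add[symmetric])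

lemma hk_b_nonzero: "m \<ge> 2 \<Longrightarrow> hk_b m \<noteq> 0"
  using sK_nonzero sK_power_int_ne_one[of m] sK_power_int_ne_one[of "m + 1"]
    sK_power_int_ne_one[of "m - 1"]
  by (simp add: hk_b_def)

lemma hk_a_eigen_relation: "m \<noteq> 0 \<Longrightarrow> hk_a m * sK powi m + (sK - 1 - hk_a m) = 0"
  using sK_power_int_ne_one[of m] by (simp add: hk_a_def field_simps)

lemma lookup_kscale [simp]: "Poly_Mapping.lookup (kscale c v) x = c * Poly_Mapping.lookup v x"
  by (simp add: kscale_def map.rep_eq when_def)

lemma kscale_add_right: "kscale c (u + v) = kscale c u + kscale c v"
  by (rule poly_mapping_eqI) (simp add: lookup_add algebra_simps)

lemma kscale_add_left: "kscale (c + d) u = kscale c u + kscale d u"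
  by (rule poly_mapping_eqI) (simp add: lookup_add algebra_simps)

lemma kscale_kscale [simp]: "kscale c (kscale d u) = kscale (c * d) u"
  by (rule poly_mapping_eqI) (simp add: algebra_simps)

lemma kscale_one [simp]: "kscale 1 u = u"
  by (rule poly_mapping_eqI) simp

lemma kscale_zero [simp]: "kscale 0 u = 0" "kscale c 0 = 0"
  by (rule poly_mapping_eqI, simp)+

lemma kscale_single [simp]: "kscale c (Poly_Mapping.single a d) = Poly_Mapping.single a (c * d)"
  by (rule poly_mapping_eqI) (simp add: lookup_single when_def)

lemma kscale_sum: "kscale c (sum f A) = (\<Sum>a\<in>A. kscale c (f a))"
  by (induction A rule: infinite_finite_induct) (simp_all add: kscale_add_right)

lemma keys_kscale_subset: "Poly_Mapping.keys (kscale c v) \<subseteq> Poly_Mapping.keys v"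
  by (auto simp: in_keys_iff)

lemma keys_single_add_single_subset:
  "Poly_Mapping.keys (Poly_Mapping.single a x + Poly_Mapping.single b y) \<subseteq> {a, b}"
  by (rule order_trans[OF keys_add]) auto

lemma lin_ext_superset:
  assumes "finite S" "Poly_Mapping.keys v \<subseteq> S"
  shows "lin_ext f v = (\<Sum>a\<in>S. kscale (Poly_Mapping.lookup v a) (f a))"
  unfolding lin_ext_def
  by (rule sum.mono_neutral_left) (use assms in \<open>auto simp: in_keys_iff\<close>)

lemma lin_ext_add: "lin_ext f (u + v) = lin_ext f u + lin_ext f v"
proof -
  let ?S = "Poly_Mapping.keys u \<union> Poly_Mapping.keys v"
  have "lin_ext f (u + v) = (\<Sum>a\<in>?S. kscale (Poly_Mapping.lookup (u + v) a) (f a))"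
    by (rule lin_ext_superset) (auto simp: keys_add)
  also have "\<dots> = (\<Sum>a\<in>?S. kscale (Poly_Mapping.lookup u a) (f a))
      + (\<Sum>a\<in>?S. kscale (Poly_Mapping.lookup v a) (f a))"
    by (simp add: lookup_add kscale_add_left sum.distrib)
  also have "\<dots> = lin_ext f u + lin_ext f v"
    using lin_ext_superset[of ?S u f] lin_ext_superset[of ?S v f] by simp
  finally show ?thesis .
qed

lemma lin_ext_kscale: "lin_ext f (kscale c u) = kscale c (lin_ext f u)"
proof -
  have "lin_ext f (kscale c u)
      = (\<Sum>a\<in>Poly_Mapping.keys u. kscale (Poly_Mapping.lookup (kscale c u) a) (f a))"
    by (rule lin_ext_superset) (auto simp: keys_kscale_subset)
  then show ?thesis
    by (simp add: lin_ext_def kscale_sum)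
qed

lemma lin_ext_single [simp]: "lin_ext f (Poly_Mapping.single a c) = kscale c (f a)"
  by (cases "c = 0") (simp_all add: lin_ext_def)

lemma keys_lin_ext_subset:
  "Poly_Mapping.keys (lin_ext f v) \<subseteq> (\<Union>a\<in>Poly_Mapping.keys v. Poly_Mapping.keys (f a))"
  unfolding lin_ext_def using keys_sum keys_kscale_subset by fastforce

lemma poly_mapping_expansion:
  "v = (\<Sum>a\<in>Poly_Mapping.keys v. kscale (Poly_Mapping.lookup v a) (Poly_Mapping.single a 1))"
  by (rule poly_mapping_eqI) (simp add: lookup_sum lookup_single when_def in_keys_iff)

definition K_linear :: "(('a \<Rightarrow>\<^sub>0 K) \<Rightarrow> ('b \<Rightarrow>\<^sub>0 K)) \<Rightarrow> bool" where
  "K_linear F \<longleftrightarrow> (\<forall>u v. F (u + v) = F u + F v) \<and> (\<forall>c u. F (kscale c u) = kscale c (F u))"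

lemma K_linear_add: "K_linear F \<Longrightarrow> F (u + v) = F u + F v"
  by (simp add: K_linear_def)

lemma K_linear_kscale: "K_linear F \<Longrightarrow> F (kscale c u) = kscale c (F u)"
  by (simp add: K_linear_def)

lemma K_linear_lin_ext: "K_linear (lin_ext f)"
  by (simp add: K_linear_def lin_ext_add lin_ext_kscale)

lemma K_linear_id: "K_linear (\<lambda>v. v)"
  by (simp add: K_linear_def)

lemma K_linear_comp: "K_linear F \<Longrightarrow> K_linear G \<Longrightarrow> K_linear (\<lambda>v. G (F v))"
  by (simp add: K_linear_def)

lemma K_linear_scaled: "K_linear F \<Longrightarrow> K_linear (\<lambda>v. kscale c (F v))"
  by (simp add: K_linear_def kscale_add_right mult.commute)

lemma K_linear_plus: "K_linear F \<Longrightarrow> K_linear G \<Longrightarrow> K_linear (\<lambda>v. F v + G v)"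
  by (simp add: K_linear_def kscale_add_right algebra_simps)

lemma K_linear_fold: "(\<And>x. x \<in> set xs \<Longrightarrow> K_linear (F x)) \<Longrightarrow> K_linear (fold F xs)"
proof (induction xs)
  case Nil
  then show ?case by (simp add: K_linear_def)
next
  case (Cons x xs)
  then have "K_linear (\<lambda>v. fold F xs (F x v))"
    using K_linear_comp[of "F x" "fold F xs"] by simp
  then show ?case
    by (simp add: comp_def)
qed

lemma K_linear_zero: "K_linear F \<Longrightarrow> F 0 = 0"
  by (metis K_linear_kscale kscale_zero(1))

lemma K_linear_sum: "K_linear F \<Longrightarrow> F (sum g A) = (\<Sum>a\<in>A. F (g a))"
  by (induction A rule: infinite_finite_induct) (simp_all add: K_linear_zero K_linear_add)

lemma K_linear_single:
  "K_linear F \<Longrightarrow> F (Poly_Mapping.single a c) = kscale c (F (Poly_Mapping.single a 1))"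
  using K_linear_kscale[of F c "Poly_Mapping.single a 1"] by simp

lemma K_linear_lin_ext_basis:
  assumes "K_linear F"
  shows "lin_ext (\<lambda>a. F (Poly_Mapping.single a 1)) v = F v"
proof -
  have "F v = F (\<Sum>a\<in>Poly_Mapping.keys v.
      kscale (Poly_Mapping.lookup v a) (Poly_Mapping.single a 1))"
    by (subst poly_mapping_expansion) (rule refl)
  also have "\<dots> = (\<Sum>a\<in>Poly_Mapping.keys v.
      kscale (Poly_Mapping.lookup v a) (F (Poly_Mapping.single a 1)))"
    using assms by (simp add: K_linear_sum K_linear_kscale del: kscale_single)
  finally show ?thesis
    by (simp add: lin_ext_def)
qed

lemma K_linear_eq_on_keys:
  assumes "K_linear F" "K_linear G"
    and "\<And>a. a \<in> Poly_Mapping.keys v \<Longrightarrow> F (Poly_Mapping.single a 1) = G (Poly_Mapping.single a 1)"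
  shows "F v = G v"
proof -
  have "lin_ext (\<lambda>a. F (Poly_Mapping.single a 1)) v = lin_ext (\<lambda>a. G (Poly_Mapping.single a 1)) v"
    unfolding lin_ext_def using assms(3) by (intro sum.cong) auto
  then show ?thesis
    using K_linear_lin_ext_basis[OF assms(1)] K_linear_lin_ext_basis[OF assms(2)] by simp
qed

lemma fold_rev_cancel:
  assumes "\<And>x v. x \<in> set xs \<Longrightarrow> P v \<Longrightarrow> f x (g x v) = v"
    and "\<And>x v. x \<in> set xs \<Longrightarrow> P v \<Longrightarrow> P (g x v)"
    and "P v"
  shows "fold f xs (fold g (rev xs) v) = v"
  using assms
proof (induction xs arbitrary: v rule: rev_induct)
  case Nil
  then show ?case by simp
next
  case (snoc x xs)
  have "fold f xs (fold g (rev xs) (g x v)) = g x v"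
    by (rule snoc.IH) (use snoc.prems in auto)
  then show ?case
    using snoc.prems by simp
qed

section \<open>The subspace 1 \<otimes> V\<close>

lemma lookup_tensor:
  "Poly_Mapping.lookup (tensor p u) = (\<lambda>(a, T). Poly_Mapping.lookup p a * Poly_Mapping.lookup u T)"
proof -
  let ?f = "\<lambda>(a, T). Poly_Mapping.lookup p a * Poly_Mapping.lookup u T"
  have "{x. ?f x \<noteq> 0} \<subseteq> Poly_Mapping.keys p \<times> Poly_Mapping.keys u"
    by (auto simp: in_keys_iff)
  then have "finite {x. ?f x \<noteq> 0}"
    by (rule finite_subset) simp
  then show ?thesis
    by (simp add: tensor_def)
qed

lemma K_linear_tensor: "K_linear (tensor p)"
  unfolding K_linear_def
  by (auto intro!: poly_mapping_eqI simp: lookup_tensor lookup_add algebra_simps)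

lemma tensor_zero_left [simp]: "tensor 0 u = 0"
  by (rule poly_mapping_eqI) (simp add: lookup_tensor)

lemma single_zero_one: "Poly_Mapping.single 0 1 = (1 :: mpoly)"
  by (rule poly_mapping_eqI) (simp add: lookup_one lookup_single when_def)

lemma lin_ext_tensor_one: "lin_ext g (tensor (1 :: mpoly) u) = lin_ext (\<lambda>T. g (0, T)) u"
proof -
  have keys: "Poly_Mapping.keys (tensor (1 :: mpoly) u) = (\<lambda>T. (0, T)) ` Poly_Mapping.keys u"
    by (auto simp: in_keys_iff lookup_tensor lookup_one when_def split: if_splits)
  show ?thesis
    unfolding lin_ext_def keys
    by (subst sum.reindex) (auto simp: inj_on_def lookup_tensor lookup_one)
qed

lemma lin_ext_tensor_one_comp: "lin_ext (\<lambda>T. tensor 1 (f T)) u = tensor 1 (lin_ext f u)"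
  unfolding lin_ext_def K_linear_sum[OF K_linear_tensor] K_linear_kscale[OF K_linear_tensor] ..

lemma var_ne_var_Suc: "var i \<noteq> var (Suc i)"
proof
  assume "var i = var (Suc i)"
  then have "Poly_Mapping.lookup (var i) (Poly_Mapping.single i 1)
      = Poly_Mapping.lookup (var (Suc i)) (Poly_Mapping.single i 1)"
    by simp
  moreover have "Poly_Mapping.single i (1 :: nat) \<noteq> Poly_Mapping.single (Suc i) 1"
    by (metis lookup_single_eq lookup_single_not_eq n_not_Suc_n zero_neq_one)
  ultimately show False
    by (simp add: var_def lookup_single when_def)
qed

lemma poly_swap_one: "poly_swap i 1 = 1"
proof -
  have "poly_swap i 1 = Poly_Mapping.single (mono_swap i 0) 1"
    unfolding poly_swap_def single_zero_one[symmetric] lin_ext_single kscale_single by simp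
  also have "mono_swap i 0 = 0"
    by (simp add: mono_swap_def)
  finally show ?thesis
    by (simp only: single_zero_one)
qed

lemma poly_w_one: "poly_w N 1 = 1"
proof -
  have "poly_w N 1 = Poly_Mapping.single (mono_w N 0) 1"
    unfolding poly_w_def single_zero_one[symmetric] lin_ext_single kscale_single by simp
  also have "mono_w N 0 = 0"
    unfolding mono_w_def by (simp add: zero_poly_mapping_def[symmetric] cong: if_cong)
  finally show ?thesis
    by (simp only: single_zero_one)
qed

lemma divdiff_one: "divdiff i 1 = 0"
  unfolding divdiff_def poly_swap_one
proof (rule the_equality)
  fix r :: mpoly
  assume "r * (var i - var (Suc i)) = 1 - 1"
  then show "r = 0"
    using var_ne_var_Suc by simp
qed simp

definition hecke_inv :: "nat \<Rightarrow> vlam \<Rightarrow> vlam" where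
  "hecke_inv i v = kscale (inverse sK) (hecke_V i v + kscale (1 - sK) v)"

text \<open>This is \<open>Xi N i\<close> on \<open>1 \<otimes> V\<close> verbatim; the factors with indices below \<open>i\<close> cancel only on
  vectors supported on tableaux.\<close>
definition jucys_murphy :: "nat \<Rightarrow> nat \<Rightarrow> vlam \<Rightarrow> vlam" where
  "jucys_murphy N i v = kscale (sK powi (int i - int N))
      (fold hecke_V (rev [i..<N]) (fold hecke_V [1..<N] (fold hecke_inv (rev [1..<i]) v)))"

lemma K_linear_hecke_V: "K_linear (hecke_V i)"
  unfolding hecke_V_def[abs_def] by (rule K_linear_lin_ext)

lemma K_linear_hecke_inv: "K_linear (hecke_inv i)"
  unfolding hecke_inv_def[abs_def]
  by (rule K_linear_scaled, rule K_linear_plus[OF K_linear_hecke_V K_linear_scaled[OF K_linear_id]])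

lemma K_linear_fold_hecke_V: "K_linear (fold hecke_V xs)"
  by (rule K_linear_fold) (rule K_linear_hecke_V)

lemma K_linear_jucys_murphy: "K_linear (jucys_murphy N i)"
  unfolding jucys_murphy_def[abs_def]
  using K_linear_comp[OF K_linear_comp[OF K_linear_fold K_linear_fold_hecke_V] K_linear_fold_hecke_V]
  by (rule K_linear_scaled) (rule K_linear_hecke_inv)

lemma opT_tensor_one: "opT i (tensor 1 u) = tensor 1 (hecke_V i u)"
  unfolding opT_def lin_ext_tensor_one hecke_V_def
  by (simp only: single_zero_one poly_swap_one divdiff_one mult_zero_right kscale_zero
      tensor_zero_left add_0 prod.case lin_ext_tensor_one_comp)

lemma opTinv_tensor_one: "opTinv i (tensor 1 u) = tensor 1 (hecke_inv i u)"
  using K_linear_tensor[of 1]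
  by (simp add: opTinv_def hecke_inv_def opT_tensor_one K_linear_add K_linear_kscale)

lemma opw_tensor_one: "opw N (tensor 1 u) = tensor 1 (fold hecke_V [1..<N] u)"
proof -
  have "opw N (tensor 1 u) = lin_ext (\<lambda>T. tensor 1 (fold hecke_V [1..<N] (Poly_Mapping.single T 1))) u"
    unfolding opw_def lin_ext_tensor_one by (simp only: single_zero_one poly_w_one prod.case)
  then show ?thesis
    by (simp only: lin_ext_tensor_one_comp K_linear_lin_ext_basis[OF K_linear_fold_hecke_V])
qed

lemma Xi_tensor_one: "Xi N i (tensor 1 v) = tensor 1 (jucys_murphy N i v)"
proof -
  have "fold opT xs (tensor 1 u) = tensor 1 (fold hecke_V xs u)" for xs u
    by (induction xs arbitrary: u) (simp_all add: opT_tensor_one)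
  moreover have "fold opTinv xs (tensor 1 u) = tensor 1 (fold hecke_inv xs u)" for xs u
    by (induction xs arbitrary: u) (simp_all add: opTinv_tensor_one)
  ultimately show ?thesis
    using K_linear_tensor[of 1]
    by (simp add: Xi_def jucys_murphy_def opw_tensor_one K_linear_kscale)
qed

section \<open>Reverse standard tableaux\<close>

lemma pos_tab_swap_fst: "pos (tab_swap T i j) i = pos T j"
  unfolding pos_def tab_swap_def by (rule arg_cong[where f = The]) (auto simp: fun_eq_iff)

lemma pos_tab_swap_snd: "i \<noteq> j \<Longrightarrow> pos (tab_swap T i j) j = pos T i"
  unfolding pos_def tab_swap_def by (rule arg_cong[where f = The]) (auto simp: fun_eq_iff)

lemma CT_tab_swap_fst: "CT (tab_swap T i j) i = CT T j"
  by (simp add: CT_def pos_tab_swap_fst)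

lemma CT_tab_swap_snd: "i \<noteq> j \<Longrightarrow> CT (tab_swap T i j) j = CT T i"
  by (simp add: CT_def pos_tab_swap_snd)

lemma tab_swap_tab_swap [simp]: "tab_swap (tab_swap T i j) i j = T"
  by (auto simp: tab_swap_def fun_eq_iff)

context
  fixes N :: nat and lam :: "nat list" and T :: tableau
  assumes partition: "is_partition N lam" and tableau: "T \<in> Tab lam"
begin

lemma entries_bij: "bij_betw T (diagram lam) {1..N}"
  using tableau partition by (simp add: Tab_def is_partition_def)

lemma entry_zero_outside: "x \<notin> diagram lam \<Longrightarrow> T x = 0"
  using tableau unfolding Tab_def by blast

lemma diagram_down_closed:
  assumes "(r, c) \<in> diagram lam" "r' \<le> r" "c' \<le> c"
  shows "(r', c') \<in> diagram lam"
  using assms partition sorted_rev_nth_mono[of lam r' r]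
  by (auto simp: diagram_def is_partition_def)

lemma entry_row_decreasing:
  "(r, c) \<in> diagram lam \<Longrightarrow> c' < c \<Longrightarrow> T (r, c) < T (r, c')"
proof (induction c)
  case (Suc c)
  have "T (r, Suc c) < T (r, c)"
    using Suc.prems(1) tableau by (simp add: Tab_def)
  moreover have "(r, c) \<in> diagram lam"
    using Suc.prems(1) diagram_down_closed by auto
  ultimately show ?case
    using Suc by (cases "c' = c") auto
qed simp

lemma entry_column_decreasing:
  "(r, c) \<in> diagram lam \<Longrightarrow> r' < r \<Longrightarrow> T (r, c) < T (r', c)"
proof (induction r)
  case (Suc r)
  have "T (Suc r, c) < T (r, c)"
    using Suc.prems(1) tableau by (simp add: Tab_def)
  moreover have "(r, c) \<in> diagram lam"
    using Suc.prems(1) diagram_down_closed by auto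
  ultimately show ?case
    using Suc by (cases "r' = r") auto
qed simp

lemma entry_decreasing:
  assumes "(r, c) \<in> diagram lam" "r' \<le> r" "c' \<le> c" "(r', c') \<noteq> (r, c)"
  shows "T (r, c) < T (r', c')"
proof (cases "r' = r")
  case True
  with assms entry_row_decreasing show ?thesis by auto
next
  case False
  then have "T (r, c) < T (r', c)"
    using assms entry_column_decreasing by auto
  moreover have "T (r', c) \<le> T (r', c')"
    using assms diagram_down_closed[of r c r' c] entry_row_decreasing[of r' c c']
    by (cases "c' = c") auto
  ultimately show ?thesis by simp
qed

lemma pos_eqI: "T x = k \<Longrightarrow> 1 \<le> k \<Longrightarrow> pos T k = x"
  unfolding pos_def
proof (rule the_equality)
  fix y
  assume "T x = k" "1 \<le> k" "T y = k"
  moreover have "x \<in> diagram lam" "y \<in> diagram lam"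
    using calculation entry_zero_outside by fastforce+
  ultimately show "y = x"
    using entries_bij by (auto simp: bij_betw_def inj_on_def)
qed

lemma pos_in_diagram:
  assumes "1 \<le> k" "k \<le> N"
  shows "pos T k \<in> diagram lam" "T (pos T k) = k"
proof -
  have "k \<in> T ` diagram lam"
    using assms entries_bij by (simp add: bij_betw_def)
  then obtain x where "x \<in> diagram lam" "T x = k"
    by blast
  moreover from this have "pos T k = x"
    using pos_eqI assms by blast
  ultimately show "pos T k \<in> diagram lam" "T (pos T k) = k"
    by simp_all
qed

lemma CT_largest: "1 \<le> N \<Longrightarrow> CT T N = 0"
proof -
  assume "1 \<le> N"
  then have x: "pos T N \<in> diagram lam" "T (pos T N) = N"
    using pos_in_diagram by auto
  then have corner: "(0, 0) \<in> diagram lam"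
    using diagram_down_closed[of "fst (pos T N)" "snd (pos T N)" 0 0] by simp
  have "pos T N = (0, 0)"
  proof (rule ccontr)
    assume "pos T N \<noteq> (0, 0)"
    then have "N < T (0, 0)"
      using entry_decreasing[of "fst (pos T N)" "snd (pos T N)" 0 0] x by auto
    moreover have "T (0, 0) \<le> N"
      using corner entries_bij by (auto simp: bij_betw_def)
    ultimately show False by simp
  qed
  then show ?thesis
    by (simp add: CT_def)
qed

context
  fixes i :: nat
  assumes i_ge: "1 \<le> i" and i_less: "i < N"
begin

lemma pos_adjacent:
  "pos T i \<in> diagram lam" "T (pos T i) = i"
  "pos T (Suc i) \<in> diagram lam" "T (pos T (Suc i)) = Suc i"
  using pos_in_diagram i_ge i_less by auto

lemma no_cell_between:
  assumes "fst (pos T (Suc i)) \<le> r" "r \<le> fst (pos T i)"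
    and "snd (pos T (Suc i)) \<le> c" "c \<le> snd (pos T i)"
  shows "(r, c) = pos T i \<or> (r, c) = pos T (Suc i)"
proof (rule ccontr)
  assume between: "\<not> ((r, c) = pos T i \<or> (r, c) = pos T (Suc i))"
  then have "T (pos T i) < T (r, c)"
    using assms entry_decreasing[of "fst (pos T i)" "snd (pos T i)" r c] pos_adjacent by auto
  moreover have "(r, c) \<in> diagram lam"
    using assms diagram_down_closed[of "fst (pos T i)" "snd (pos T i)" r c] pos_adjacent by auto
  then have "T (r, c) < T (pos T (Suc i))"
    using between assms entry_decreasing[of r c] by (cases "pos T (Suc i)") auto
  ultimately show False
    using pos_adjacent by simp
qed

lemma pos_not_le_pos_Suc:
  "\<not> (fst (pos T i) \<le> fst (pos T (Suc i)) \<and> snd (pos T i) \<le> snd (pos T (Suc i)))"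
proof
  assume "fst (pos T i) \<le> fst (pos T (Suc i)) \<and> snd (pos T i) \<le> snd (pos T (Suc i))"
  moreover have "pos T i \<noteq> pos T (Suc i)"
    using pos_adjacent by (metis n_not_Suc_n)
  ultimately have "T (pos T (Suc i)) < T (pos T i)"
    using entry_decreasing[of "fst (pos T (Suc i))" "snd (pos T (Suc i))"
        "fst (pos T i)" "snd (pos T i)"] pos_adjacent by simp
  then show False
    using pos_adjacent by simp
qed

lemma CT_same_row:
  assumes "fst (pos T i) = fst (pos T (Suc i))"
  shows "CT T i = CT T (Suc i) + 1"
proof -
  have "snd (pos T (Suc i)) < snd (pos T i)"
    using assms pos_not_le_pos_Suc by auto
  then have "(fst (pos T (Suc i)), Suc (snd (pos T (Suc i)))) = pos T i \<or>
      (fst (pos T (Suc i)), Suc (snd (pos T (Suc i)))) = pos T (Suc i)"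
    using assms by (intro no_cell_between) auto
  then have "(fst (pos T (Suc i)), Suc (snd (pos T (Suc i)))) = pos T i"
    by (metis n_not_Suc_n snd_conv)
  from this[symmetric] show ?thesis
    by (simp add: CT_def)
qed

lemma CT_same_column:
  assumes "snd (pos T i) = snd (pos T (Suc i))"
  shows "CT T i = CT T (Suc i) - 1"
proof -
  have "fst (pos T (Suc i)) < fst (pos T i)"
    using assms pos_not_le_pos_Suc by auto
  then have "(Suc (fst (pos T (Suc i))), snd (pos T (Suc i))) = pos T i \<or>
      (Suc (fst (pos T (Suc i))), snd (pos T (Suc i))) = pos T (Suc i)"
    using assms by (intro no_cell_between) auto
  then have "(Suc (fst (pos T (Suc i))), snd (pos T (Suc i))) = pos T i"
    by (metis n_not_Suc_n fst_conv)
  from this[symmetric] show ?thesis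
    by (simp add: CT_def)
qed

lemma higher_row_imp_left_column:
  assumes "fst (pos T (Suc i)) < fst (pos T i)" "snd (pos T i) \<noteq> snd (pos T (Suc i))"
  shows "snd (pos T i) < snd (pos T (Suc i))"
proof (rule ccontr)
  assume "\<not> ?thesis"
  then have "(fst (pos T (Suc i)), snd (pos T i)) = pos T i \<or>
      (fst (pos T (Suc i)), snd (pos T i)) = pos T (Suc i)"
    using assms by (intro no_cell_between) auto
  then show False
    using assms by (metis fst_conv less_irrefl snd_conv)
qed

lemma tab_swap_in_Tab:
  assumes "fst (pos T i) \<noteq> fst (pos T (Suc i))" "snd (pos T i) \<noteq> snd (pos T (Suc i))"
  shows "tab_swap T i (Suc i) \<in> Tab lam"
proof -
  define \<sigma> where "\<sigma> k = (if k = i then Suc i else if k = Suc i then i else k)" for k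
  have swap_eq: "tab_swap T i (Suc i) = \<sigma> \<circ> T"
    by (simp add: tab_swap_def \<sigma>_def fun_eq_iff)
  have "bij_betw \<sigma> {1..N} {1..N}"
    by (rule bij_betw_byWitness[where f' = \<sigma>]) (use i_ge i_less in \<open>auto simp: \<sigma>_def\<close>)
  then have bij: "bij_betw (\<sigma> \<circ> T) (diagram lam) {1..N}"
    using entries_bij by (rule bij_betw_trans[rotated])
  have order_preserved: "\<sigma> (T y) < \<sigma> (T x)"
    if "T y < T x" "fst x = fst y \<or> snd x = snd y" for x y
  proof -
    have "\<not> (T x = Suc i \<and> T y = i)"
      using that(2) assms pos_eqI[of x "Suc i"] pos_eqI[of y i] i_ge by auto
    then show ?thesis
      using that(1) by (auto simp: \<sigma>_def)
  qed
  show ?thesis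
    unfolding Tab_def swap_eq
  proof (intro CollectI conjI allI impI)
    show "(\<sigma> \<circ> T) x = 0" if "x \<notin> diagram lam" for x
      using that entry_zero_outside i_ge by (simp add: \<sigma>_def)
    show "bij_betw (\<sigma> \<circ> T) (diagram lam) {1..sum_list lam}"
      using bij partition by (simp add: is_partition_def)
    show "(\<sigma> \<circ> T) (r, Suc c) < (\<sigma> \<circ> T) (r, c)" if "(r, Suc c) \<in> diagram lam" for r c
      using that tableau order_preserved[of "(r, Suc c)" "(r, c)"] by (simp add: Tab_def)
    show "(\<sigma> \<circ> T) (Suc r, c) < (\<sigma> \<circ> T) (r, c)" if "(Suc r, c) \<in> diagram lam" for r c
      using that tableau order_preserved[of "(Suc r, c)" "(r, c)"] by (simp add: Tab_def)
  qed
qed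

end

end

definition northwest :: "tableau \<Rightarrow> nat \<Rightarrow> bool" where
  "northwest T i \<longleftrightarrow> fst (pos T (Suc i)) < fst (pos T i) \<and> snd (pos T i) < snd (pos T (Suc i))"

lemma hecke_tab_northwest:
  assumes "is_partition N lam" "T \<in> Tab lam" "1 \<le> i" "i < N" "northwest T i"
  defines "U \<equiv> tab_swap T i (Suc i)" and "m \<equiv> CT T (Suc i) - CT T i"
  shows "U \<in> Tab lam" "U \<noteq> T" "2 \<le> m" "CT U i = CT T (Suc i)" "CT U (Suc i) = CT T i"
    and "hecke_tab i T = Poly_Mapping.single T (hk_a m) + Poly_Mapping.single U (hk_b m)"
    and "hecke_tab i U = Poly_Mapping.single U (sK - 1 - hk_a m)
      + Poly_Mapping.single T (((sK - 1 - hk_a m) * hk_a m + sK) / hk_b m)"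
proof -
  have nw: "fst (pos T (Suc i)) < fst (pos T i)" "snd (pos T i) < snd (pos T (Suc i))"
    using assms(5) by (simp_all add: northwest_def)
  show "U \<in> Tab lam"
    unfolding U_def using assms(1-4) nw by (intro tab_swap_in_Tab) auto
  show "U \<noteq> T"
  proof
    assume "U = T"
    then have "U (pos T i) = T (pos T i)"
      by simp
    then show False
      using pos_adjacent(2)[OF assms(1-4)] by (simp add: U_def tab_swap_def)
  qed
  show "2 \<le> m"
    using nw by (simp add: m_def CT_def)
  show "CT U i = CT T (Suc i)" "CT U (Suc i) = CT T i"
    by (simp_all add: U_def CT_tab_swap_fst CT_tab_swap_snd)
  show "hecke_tab i T = Poly_Mapping.single T (hk_a m) + Poly_Mapping.single U (hk_b m)"
    using nw by (simp add: hecke_tab_def U_def m_def Let_def)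
  show "hecke_tab i U = Poly_Mapping.single U (sK - 1 - hk_a m)
      + Poly_Mapping.single T (((sK - 1 - hk_a m) * hk_a m + sK) / hk_b m)"
    using nw by (simp add: hecke_tab_def U_def m_def Let_def pos_tab_swap_fst pos_tab_swap_snd
        CT_tab_swap_fst CT_tab_swap_snd)
qed

lemma hecke_tab_cases:
  assumes "is_partition N lam" "T \<in> Tab lam" "1 \<le> i" "i < N"
  obtains (same_row) "hecke_tab i T = Poly_Mapping.single T sK" "CT T i = CT T (Suc i) + 1"
  | (same_column) "hecke_tab i T = Poly_Mapping.single T (-1)" "CT T i = CT T (Suc i) - 1"
  | (northwest) "northwest T i"
  | (southeast) "tab_swap T i (Suc i) \<in> Tab lam" "northwest (tab_swap T i (Suc i)) i"
proof -
  consider "fst (pos T i) = fst (pos T (Suc i))"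
    | "fst (pos T i) \<noteq> fst (pos T (Suc i))" "snd (pos T i) = snd (pos T (Suc i))"
    | "fst (pos T (Suc i)) < fst (pos T i)" "snd (pos T i) \<noteq> snd (pos T (Suc i))"
    | "fst (pos T i) < fst (pos T (Suc i))" "snd (pos T i) \<noteq> snd (pos T (Suc i))"
    by linarith
  then show ?thesis
  proof cases
    case 1
    then show ?thesis
      using same_row CT_same_row[OF assms] by (simp add: hecke_tab_def)
  next
    case 2
    then show ?thesis
      using same_column CT_same_column[OF assms] by (simp add: hecke_tab_def)
  next
    case 3
    then show ?thesis
      using northwest higher_row_imp_left_column[OF assms] by (simp add: northwest_def)
  next
    case 4
    let ?U = "tab_swap T i (Suc i)"
    have U: "?U \<in> Tab lam"
      using 4 by (intro tab_swap_in_Tab[OF assms]) auto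
    moreover have "northwest ?U i"
      using 4 higher_row_imp_left_column[OF assms(1) U assms(3,4)]
      by (simp add: northwest_def pos_tab_swap_fst pos_tab_swap_snd)
    ultimately show ?thesis
      by (rule southeast)
  qed
qed

lemma keys_hecke_tab_subset:
  assumes "is_partition N lam" "T \<in> Tab lam" "1 \<le> i" "i < N"
  shows "Poly_Mapping.keys (hecke_tab i T) \<subseteq> Tab lam"
  using assms(1-4)
proof (cases rule: hecke_tab_cases)
  case northwest
  note pair = hecke_tab_northwest[OF assms northwest]
  show ?thesis
    unfolding pair(6) using pair(1) assms(2)
    by (intro order_trans[OF keys_single_add_single_subset]) auto
next
  case southeast
  note pair = hecke_tab_northwest[OF assms(1) southeast(1) assms(3,4) southeast(2)]
  show ?thesis
    using pair(7) southeast(1) assms(2)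
    by (simp only: tab_swap_tab_swap) (intro order_trans[OF keys_single_add_single_subset], auto)
qed (use assms(2) in simp_all)

lemma keys_hecke_V_subset:
  assumes "is_partition N lam" "1 \<le> i" "i < N" "Poly_Mapping.keys v \<subseteq> Tab lam"
  shows "Poly_Mapping.keys (hecke_V i v) \<subseteq> Tab lam"
  using keys_lin_ext_subset[of "hecke_tab i" v] keys_hecke_tab_subset[OF assms(1) _ assms(2,3)] assms(4)
  unfolding hecke_V_def by blast

section \<open>Two-dimensional invariant subspaces\<close>

lemma kscale_pair_add_pair:
  "kscale p (Poly_Mapping.single T x + Poly_Mapping.single U y)
     + kscale q (Poly_Mapping.single U z + Poly_Mapping.single T w)
   = Poly_Mapping.single T (p * x + q * w) + Poly_Mapping.single U (p * y + q * z)"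
  by (rule poly_mapping_eqI) (simp add: lookup_add lookup_single when_def algebra_simps)

lemma single_add_single_eq_iff:
  assumes "T \<noteq> U"
  shows "Poly_Mapping.single T x + Poly_Mapping.single U y
      = Poly_Mapping.single T x' + Poly_Mapping.single U y' \<longleftrightarrow> x = x' \<and> y = y'"
proof
  assume "Poly_Mapping.single T x + Poly_Mapping.single U y
      = Poly_Mapping.single T x' + Poly_Mapping.single U y'"
  from arg_cong[where f = "\<lambda>v. (Poly_Mapping.lookup v T, Poly_Mapping.lookup v U)", OF this]
  show "x = x' \<and> y = y'"
    using assms by (simp add: lookup_add lookup_single)
qed simp

lemma K_linear_single_add_single:
  assumes "K_linear h"
  shows "h (Poly_Mapping.single T x + Poly_Mapping.single U y)
    = kscale x (h (Poly_Mapping.single T 1)) + kscale y (h (Poly_Mapping.single U 1))"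
  by (simp only: K_linear_add[OF assms] K_linear_single[OF assms, of T x]
      K_linear_single[OF assms, of U y])

context
  fixes h :: "('a \<Rightarrow>\<^sub>0 K) \<Rightarrow> ('a \<Rightarrow>\<^sub>0 K)" and T U :: 'a and s a b c :: K
  assumes linear: "K_linear h" and distinct: "T \<noteq> U"
    and image_T: "h (Poly_Mapping.single T 1) = Poly_Mapping.single T a + Poly_Mapping.single U b"
    and image_U: "h (Poly_Mapping.single U 1) = Poly_Mapping.single U (s - 1 - a) + Poly_Mapping.single T c"
    and product: "b * c = (s - 1 - a) * a + s"
begin

lemma two_dim_quadratic:
  "h (h (Poly_Mapping.single T 1))
    = kscale (s - 1) (h (Poly_Mapping.single T 1)) + kscale s (Poly_Mapping.single T 1)"
proof -
  have "h (h (Poly_Mapping.single T 1))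
      = kscale a (Poly_Mapping.single T a + Poly_Mapping.single U b)
        + kscale b (Poly_Mapping.single U (s - 1 - a) + Poly_Mapping.single T c)"
    by (simp only: image_T K_linear_single_add_single[OF linear] image_U)
  also have "\<dots> = Poly_Mapping.single T ((s - 1) * a + s) + Poly_Mapping.single U ((s - 1) * b)"
    unfolding kscale_pair_add_pair single_add_single_eq_iff[OF distinct] product
    by (simp add: algebra_simps)
  also have "\<dots> = kscale (s - 1) (h (Poly_Mapping.single T 1)) + kscale s (Poly_Mapping.single T 1)"
    unfolding image_T
    by (rule poly_mapping_eqI) (simp add: lookup_add lookup_single when_def algebra_simps)
  finally show ?thesis .
qed

text \<open>The relation \<open>a x + (s - 1 - a) = 0\<close> kills the \<open>U\<close>-component of \<open>h (j (h T))\<close>.\<close>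
lemma two_dim_conjugate_eigen:
  assumes "K_linear j" "s \<noteq> 0" "a * x + (s - 1 - a) = 0"
    and "j (Poly_Mapping.single T 1) = Poly_Mapping.single T (y * x)"
    and "j (Poly_Mapping.single U 1) = Poly_Mapping.single U y"
  shows "kscale (inverse s) (h (j (h (Poly_Mapping.single T 1)))) = Poly_Mapping.single T y"
proof -
  have "h (j (h (Poly_Mapping.single T 1)))
      = kscale (a * (y * x)) (Poly_Mapping.single T a + Poly_Mapping.single U b)
        + kscale (b * y) (Poly_Mapping.single U (s - 1 - a) + Poly_Mapping.single T c)"
    by (simp only: image_T K_linear_single_add_single[OF assms(1)] assms(4,5) kscale_single
        mult_1_right K_linear_single_add_single[OF linear] image_U)
  also have "\<dots> = Poly_Mapping.single T (y * (a * (a * x + (s - 1 - a)) + s))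
      + Poly_Mapping.single U (b * y * (a * x + (s - 1 - a)))"
    unfolding kscale_pair_add_pair single_add_single_eq_iff[OF distinct]
      mult.assoc[of b y c] mult.left_commute[of b y c] product
    by (simp add: algebra_simps)
  also have "\<dots> = Poly_Mapping.single T (y * s)"
    using assms(3) by simp
  finally show ?thesis
    using assms(2) by (simp add: field_simps)
qed

end

text \<open>The hypotheses of the context are symmetric under exchanging \<open>T\<close> and \<open>U\<close> together with
  \<open>a \<mapsto> s - 1 - a\<close> and \<open>b \<leftrightarrow> c\<close>.\<close>

lemma two_dim_quadratic_swap:
  assumes "K_linear h" "T \<noteq> U"
    and "h (Poly_Mapping.single T 1) = Poly_Mapping.single T a + Poly_Mapping.single U b"
    and "h (Poly_Mapping.single U 1) = Poly_Mapping.single U (s - 1 - a) + Poly_Mapping.single T c"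
    and "b * c = (s - 1 - a) * a + s"
  shows "h (h (Poly_Mapping.single U 1))
    = kscale (s - 1) (h (Poly_Mapping.single U 1)) + kscale s (Poly_Mapping.single U 1)"
  using assms(1) assms(2)[symmetric] assms(4)
proof (rule two_dim_quadratic)
  show "h (Poly_Mapping.single T 1)
      = Poly_Mapping.single T (s - 1 - (s - 1 - a)) + Poly_Mapping.single U b"
    using assms(3) by simp
  show "c * b = (s - 1 - (s - 1 - a)) * (s - 1 - a) + s"
    using assms(5) by (simp add: mult.commute[of c b] mult.commute[of a])
qed

lemma two_dim_conjugate_eigen_swap:
  assumes "K_linear h" "T \<noteq> U"
    and "h (Poly_Mapping.single T 1) = Poly_Mapping.single T a + Poly_Mapping.single U b"
    and "h (Poly_Mapping.single U 1) = Poly_Mapping.single U (s - 1 - a) + Poly_Mapping.single T c"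
    and "b * c = (s - 1 - a) * a + s"
    and "K_linear j" "s \<noteq> 0" "x \<noteq> 0" "a * x + (s - 1 - a) = 0"
    and "j (Poly_Mapping.single T 1) = Poly_Mapping.single T (y * x)"
    and "j (Poly_Mapping.single U 1) = Poly_Mapping.single U y"
  shows "kscale (inverse s) (h (j (h (Poly_Mapping.single U 1)))) = Poly_Mapping.single U (y * x)"
  using assms(1) assms(2)[symmetric] assms(4) _ _ assms(6,7)
proof (rule two_dim_conjugate_eigen[where x = "inverse x"])
  show "h (Poly_Mapping.single T 1)
      = Poly_Mapping.single T (s - 1 - (s - 1 - a)) + Poly_Mapping.single U b"
    using assms(3) by simp
  show "c * b = (s - 1 - (s - 1 - a)) * (s - 1 - a) + s"
    using assms(5) by (simp add: mult.commute[of c b] mult.commute[of a])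
  show "(s - 1 - a) * inverse x + (s - 1 - (s - 1 - a)) = 0"
    using assms(8,9) by (simp add: field_simps)
  show "j (Poly_Mapping.single U 1) = Poly_Mapping.single U (y * x * inverse x)"
    using assms(8,11) by (simp add: field_simps)
qed (use assms(10) in simp)

section \<open>The Hecke relations on V\<close>

lemma hecke_V_single: "hecke_V i (Poly_Mapping.single T 1) = hecke_tab i T"
  by (simp add: hecke_V_def)

lemma hecke_V_northwest_pair:
  assumes "is_partition N lam" "T \<in> Tab lam" "1 \<le> i" "i < N" "northwest T i"
  defines "U \<equiv> tab_swap T i (Suc i)" and "m \<equiv> CT T (Suc i) - CT T i"
  defines "c \<equiv> ((sK - 1 - hk_a m) * hk_a m + sK) / hk_b m"
  shows "hecke_V i (Poly_Mapping.single T 1)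
      = Poly_Mapping.single T (hk_a m) + Poly_Mapping.single U (hk_b m)"
    and "hecke_V i (Poly_Mapping.single U 1)
      = Poly_Mapping.single U (sK - 1 - hk_a m) + Poly_Mapping.single T c"
    and "hk_b m * c = (sK - 1 - hk_a m) * hk_a m + sK"
  using hecke_tab_northwest[OF assms(1-5)] hk_b_nonzero
  by (simp_all add: hecke_V_single U_def m_def c_def)

lemma hecke_V_quadratic_single:
  assumes "is_partition N lam" "T \<in> Tab lam" "1 \<le> i" "i < N"
  shows "hecke_V i (hecke_V i (Poly_Mapping.single T 1))
    = kscale (sK - 1) (hecke_V i (Poly_Mapping.single T 1)) + kscale sK (Poly_Mapping.single T 1)"
  using assms
proof (cases rule: hecke_tab_cases)
  case same_row
  then show ?thesis
    by (simp add: hecke_V_single hecke_V_def single_add[symmetric] algebra_simps)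
next
  case same_column
  then show ?thesis
    by (simp add: hecke_V_single hecke_V_def single_add[symmetric] algebra_simps)
next
  case northwest
  note pair = hecke_V_northwest_pair[OF assms northwest]
  show ?thesis
    using K_linear_hecke_V hecke_tab_northwest(2)[OF assms northwest, symmetric] pair
    by (rule two_dim_quadratic)
next
  case southeast
  note pair = hecke_V_northwest_pair[OF assms(1) southeast(1) assms(3,4) southeast(2),
      unfolded tab_swap_tab_swap]
  have "tab_swap T i (Suc i) \<noteq> T"
    using hecke_tab_northwest(2)[OF assms(1) southeast(1) assms(3,4) southeast(2)] by simp
  with K_linear_hecke_V show ?thesis
    using pair by (rule two_dim_quadratic_swap)
qed

lemma hecke_V_quadratic:
  assumes "is_partition N lam" "1 \<le> i" "i < N" "Poly_Mapping.keys v \<subseteq> Tab lam"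
  shows "hecke_V i (hecke_V i v) = kscale (sK - 1) (hecke_V i v) + kscale sK v"
proof (rule K_linear_eq_on_keys[where v = v])
  show "K_linear (\<lambda>v. hecke_V i (hecke_V i v))"
    using K_linear_hecke_V by (rule K_linear_comp) (rule K_linear_hecke_V)
  show "K_linear (\<lambda>v. kscale (sK - 1) (hecke_V i v) + kscale sK v)"
    by (intro K_linear_plus K_linear_scaled K_linear_hecke_V K_linear_id)
qed (use assms hecke_V_quadratic_single in blast)

lemma hecke_inv_hecke_V_eq:
  "hecke_inv i (hecke_V i v) = kscale (inverse sK) (hecke_V i (hecke_V i v) + kscale (1 - sK) (hecke_V i v))"
  "hecke_V i (hecke_inv i v) = kscale (inverse sK) (hecke_V i (hecke_V i v) + kscale (1 - sK) (hecke_V i v))"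
  by (simp_all add: hecke_inv_def K_linear_add[OF K_linear_hecke_V] K_linear_kscale[OF K_linear_hecke_V])

lemma hecke_inv_inverse:
  assumes "is_partition N lam" "1 \<le> i" "i < N" "Poly_Mapping.keys v \<subseteq> Tab lam"
  shows "hecke_inv i (hecke_V i v) = v" "hecke_V i (hecke_inv i v) = v"
proof -
  have "hecke_V i (hecke_V i v) + kscale (1 - sK) (hecke_V i v) = kscale sK v"
    unfolding hecke_V_quadratic[OF assms]
    by (rule poly_mapping_eqI) (simp add: lookup_add algebra_simps)
  then show "hecke_inv i (hecke_V i v) = v" "hecke_V i (hecke_inv i v) = v"
    using sK_nonzero by (simp_all add: hecke_inv_hecke_V_eq)
qed

lemma keys_hecke_inv_subset:
  assumes "is_partition N lam" "1 \<le> i" "i < N" "Poly_Mapping.keys v \<subseteq> Tab lam"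
  shows "Poly_Mapping.keys (hecke_inv i v) \<subseteq> Tab lam"
  unfolding hecke_inv_def
  using keys_hecke_V_subset[OF assms] assms(4) keys_add[of "hecke_V i v"]
    keys_kscale_subset[of _ "hecke_V i v + kscale (1 - sK) v"] keys_kscale_subset[of _ v]
  by blast

section \<open>Eigenvalues of the Jucys--Murphy elements\<close>

lemma jucys_murphy_last:
  assumes "is_partition N lam" "Poly_Mapping.keys v \<subseteq> Tab lam"
  shows "jucys_murphy N N v = v"
proof -
  have "fold hecke_V [1..<N] (fold hecke_inv (rev [1..<N]) v) = v"
    by (rule fold_rev_cancel[where P = "\<lambda>v. Poly_Mapping.keys v \<subseteq> Tab lam"])
      (use assms hecke_inv_inverse(2) keys_hecke_inv_subset in auto)
  then show ?thesis
    by (simp add: jucys_murphy_def)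
qed

lemma jucys_murphy_rec:
  assumes "is_partition N lam" "1 \<le> i" "i < N" "Poly_Mapping.keys v \<subseteq> Tab lam"
  shows "jucys_murphy N i v
    = kscale (inverse sK) (hecke_V i (jucys_murphy N (Suc i) (hecke_V i v)))"
proof -
  have "rev [1..<Suc i] = i # rev [1..<i]" "rev [i..<N] = rev [Suc i..<N] @ [i]"
    using assms(2,3) by (simp_all add: upt_conv_Cons)
  moreover have "inverse sK * sK powi (int (Suc i) - int N) = sK powi (int i - int N)"
    using sK_power_int_diff[of "int (Suc i) - int N" "int i - int N"] sK_nonzero by simp
  ultimately show ?thesis
    using hecke_inv_inverse(1)[OF assms]
    by (simp add: jucys_murphy_def K_linear_kscale[OF K_linear_hecke_V])
qed

lemma jucys_murphy_northwest_pair: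
  assumes "is_partition N lam" "T \<in> Tab lam" "1 \<le> i" "i < N" "northwest T i"
    and eigen: "\<And>T. T \<in> Tab lam \<Longrightarrow> jucys_murphy N (Suc i) (Poly_Mapping.single T 1)
      = Poly_Mapping.single T (sK powi CT T (Suc i))"
  defines "U \<equiv> tab_swap T i (Suc i)"
  shows "jucys_murphy N i (Poly_Mapping.single T 1) = Poly_Mapping.single T (sK powi CT T i)"
    and "jucys_murphy N i (Poly_Mapping.single U 1) = Poly_Mapping.single U (sK powi CT U i)"
proof -
  note tab = hecke_tab_northwest[OF assms(1-5), folded U_def]
  note pair = hecke_V_northwest_pair[OF assms(1-5), folded U_def]
  let ?m = "CT T (Suc i) - CT T i"
  have relation: "hk_a ?m * sK powi ?m + (sK - 1 - hk_a ?m) = 0"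
    using tab(3) by (intro hk_a_eigen_relation) simp
  have eigen_T: "jucys_murphy N (Suc i) (Poly_Mapping.single T 1)
      = Poly_Mapping.single T (sK powi CT T i * sK powi ?m)"
    using eigen[OF assms(2)] sK_power_int_diff by simp
  have eigen_U: "jucys_murphy N (Suc i) (Poly_Mapping.single U 1)
      = Poly_Mapping.single U (sK powi CT T i)"
    using eigen[OF tab(1)] tab(5) by simp
  have rec: "jucys_murphy N i (Poly_Mapping.single V 1)
      = kscale (inverse sK) (hecke_V i (jucys_murphy N (Suc i) (hecke_V i (Poly_Mapping.single V 1))))"
    if "V \<in> Tab lam" for V
    using that by (intro jucys_murphy_rec[OF assms(1,3,4)]) simp
  show "jucys_murphy N i (Poly_Mapping.single T 1) = Poly_Mapping.single T (sK powi CT T i)"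
    unfolding rec[OF assms(2)]
    using K_linear_hecke_V tab(2)[symmetric] pair K_linear_jucys_murphy sK_nonzero relation
      eigen_T eigen_U
    by (rule two_dim_conjugate_eigen)
  show "jucys_murphy N i (Poly_Mapping.single U 1) = Poly_Mapping.single U (sK powi CT U i)"
    unfolding rec[OF tab(1)] tab(4) sK_power_int_diff[of "CT T (Suc i)" "CT T i"]
    using K_linear_hecke_V tab(2)[symmetric] pair K_linear_jucys_murphy sK_nonzero _ relation
      eigen_T eigen_U
    by (rule two_dim_conjugate_eigen_swap) (simp add: sK_nonzero)
qed

lemma jucys_murphy_hecke_eigenvector:
  assumes "is_partition N lam" "T \<in> Tab lam" "1 \<le> i" "i < N"
    and "hecke_tab i T = Poly_Mapping.single T e"
    and "jucys_murphy N (Suc i) (Poly_Mapping.single T 1) = Poly_Mapping.single T y"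
  shows "jucys_murphy N i (Poly_Mapping.single T 1) = Poly_Mapping.single T (inverse sK * (e * y * e))"
proof -
  have "jucys_murphy N i (Poly_Mapping.single T 1)
      = kscale (inverse sK) (hecke_V i (jucys_murphy N (Suc i) (Poly_Mapping.single T e)))"
    using jucys_murphy_rec[OF assms(1,3,4), of "Poly_Mapping.single T 1"] assms(2,5)
    by (simp add: hecke_V_single)
  also have "\<dots> = kscale (inverse sK) (hecke_V i (Poly_Mapping.single T (e * y)))"
    using K_linear_single[OF K_linear_jucys_murphy, of N "Suc i" T e] assms(6) by simp
  also have "\<dots> = Poly_Mapping.single T (inverse sK * (e * y * e))"
    using K_linear_single[OF K_linear_hecke_V, of i T "e * y"] assms(5) by (simp add: hecke_V_single)
  finally show ?thesis .
qed

lemma jucys_murphy_eigen_step: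
  assumes "is_partition N lam" "T \<in> Tab lam" "1 \<le> i" "i < N"
    and eigen: "\<And>T. T \<in> Tab lam \<Longrightarrow> jucys_murphy N (Suc i) (Poly_Mapping.single T 1)
      = Poly_Mapping.single T (sK powi CT T (Suc i))"
  shows "jucys_murphy N i (Poly_Mapping.single T 1) = Poly_Mapping.single T (sK powi CT T i)"
  using assms(1-4)
proof (cases rule: hecke_tab_cases)
  case same_row
  with sK_nonzero show ?thesis
    using jucys_murphy_hecke_eigenvector[OF assms(1-4) same_row(1) eigen[OF assms(2)]]
    by (simp add: power_int_add field_simps)
next
  case same_column
  then have "sK powi CT T (Suc i) = sK powi CT T i * sK"
    using sK_nonzero power_int_add_1[of sK "CT T i"] by simp
  with sK_nonzero show ?thesis
    using jucys_murphy_hecke_eigenvector[OF assms(1-4) same_column(1) eigen[OF assms(2)]]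
    by (simp add: field_simps)
next
  case northwest
  then show ?thesis
    using jucys_murphy_northwest_pair(1)[OF assms(1-4) _ eigen] by blast
next
  case southeast
  then show ?thesis
    using jucys_murphy_northwest_pair(2)[OF assms(1) southeast(1) assms(3,4) southeast(2) eigen]
    by simp
qed

lemma jucys_murphy_eigen:
  assumes "is_partition N lam" "T \<in> Tab lam" "1 \<le> i" "i \<le> N"
  shows "jucys_murphy N i (Poly_Mapping.single T 1) = Poly_Mapping.single T (sK powi CT T i)"
  using assms(4,2,3)
proof (induction i arbitrary: T rule: inc_induct)
  case base
  then show ?case
    using jucys_murphy_last[OF assms(1)] CT_largest[OF assms(1) base(1)] by simp
next
  case (step i)
  then show ?case
    using jucys_murphy_eigen_step[OF assms(1)] by simp
qed

theorem proposition3p2: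
  fixes N :: nat and lam :: "nat list" and T :: tableau and i :: nat
  assumes "2 \<le> N"
    and "is_partition N lam"
    and "T \<in> Tab lam"
    and "1 \<le> i" and "i \<le> N"
  shows "Xi N i (tensor 1 (Poly_Mapping.single T 1))
         = kscale (sK powi CT T i) (tensor 1 (Poly_Mapping.single T 1))"
proof -
  have "Xi N i (tensor 1 (Poly_Mapping.single T 1))
      = tensor 1 (jucys_murphy N i (Poly_Mapping.single T 1))"
    by (rule Xi_tensor_one)
  also have "\<dots> = tensor 1 (kscale (sK powi CT T i) (Poly_Mapping.single T 1))"
    using jucys_murphy_eigen[OF assms(2-5)] by simp
  also have "\<dots> = kscale (sK powi CT T i) (tensor 1 (Poly_Mapping.single T 1))"
    by (rule K_linear_kscale[OF K_linear_tensor])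
  finally show ?thesis .
qed

end
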